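(* Let $A=k_{-1}[x_1,\dots,x_n]$ (i.e. $p_{ij}=-1$ for all $i\neq j$), and let $G$ be a finite subgroup of $\mathrm{Aut}(A)$ generated by quasi-reflections such that $[n]$ is a circle for $G$ and $\tau_{i,j,1}\in G$ for all $i\ne j$. Define $\Theta_i=\{\lambda\in k^\times:\theta_{i,\lambda}\in G\}$, $T_{i,j}=\{\lambda\in k^\times:\tau_{i,j,\lambda}\in G\}$, $S_{i,j}=\{\lambda\in k^\times: s_{i,j,\lambda}\in G\}$. Then: (a) $\Theta_i=\Theta_j$ for all $i,j$, and $\Theta_i$ is a cyclic group of some order $\alpha$; (b) $S_{i,j}=S_{i',j'}$ for all pairs $i\ne j$, $i'\ne j'$, and $S_{i,j}$ is cyclic of some even order $\beta$; (c) $T_{i,j}=T_{i',j'}=S_{i,j}$ for all such pairs; (d) $\alpha$ divides $\beta$.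
   Context: $k$ is algebraically closed of characteristic zero, $n\ge2$, $[n]=\{1,\dots,n\}$. $A=k_{-1}[x_1,\dots,x_n]$ is the graded $k$-algebra generated by $x_1,\dots,x_n$ (degree 1) with $x_jx_i=-x_ix_j$ for $i\ne j$. $\mathrm{Aut}(A)$: graded algebra automorphisms; $g$ is a quasi-reflection if $\sum_i\mathrm{tr}(g|_{A_i})t^i=\frac1{(1-t)^{n-1}(1-\lambda t)}$ with $\lambda\ne1$. For $s\in[n]$, $\lambda\in k^\times$: $\theta_{s,\lambda}(x_s)=\lambda x_s$, $\theta_{s,\lambda}(x_i)=x_i$ ($i\ne s$). For $s\ne t$, $\lambda\in k^\times$: $\tau_{s,t,\lambda}(x_s)=\lambda x_t$, $\tau_{s,t,\lambda}(x_t)=-\lambda^{-1}x_s$, $\tau_{s,t,\lambda}(x_i)=x_i$ otherwise; $s_{s,t,\lambda}(x_s)=\lambda x_s$, $s_{s,t,\lambda}(x_t)=\lambda^{-1}x_t$, $s_{s,t,\lambda}(x_i)=x_i$ otherwise. $[n]$ is a circle for $G$ if for each pair of distinct $i,j$ there are $\tau_{i_s,j_s,\lambda_s}\in G$, $s=0,\dots,t$, with $i_0=i$, $i_{s+1}=j_s$, $j_t=j$. *)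

theory Defs
  imports "HOL-Computational_Algebra.Polynomial" "HOL-Computational_Algebra.Formal_Power_Series"
begin

text \<open>The skew polynomial ring A = k_{-1}[x_1,...,x_n], realised concretely: an element is a
  coefficient function on exponent vectors a (with a i = 0 for i outside {1..n}) of finite support;
  the monomial x^a means x_1^(a 1) ... x_n^(a n).\<close>

type_synonym 'k skel = "(nat \<Rightarrow> nat) \<Rightarrow> 'k"

definition expvecs :: "nat \<Rightarrow> (nat \<Rightarrow> nat) set" where
  "expvecs n = {a. \<forall>i. i \<notin> {1..n} \<longrightarrow> a i = 0}"

definition mdeg :: "nat \<Rightarrow> (nat \<Rightarrow> nat) \<Rightarrow> nat" where
  "mdeg n a = (\<Sum>i\<in>{1..n}. a i)"

definition Acar :: "nat \<Rightarrow> ('k::field) skel set" where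
  "Acar n = {f. finite {a. f a \<noteq> 0} \<and> (\<forall>a. f a \<noteq> 0 \<longrightarrow> a \<in> expvecs n)}"

text \<open>x^a x^b = (-1)^(sum over i>j of a_i b_j) x^(a+b)\<close>
definition msign :: "nat \<Rightarrow> (nat \<Rightarrow> nat) \<Rightarrow> (nat \<Rightarrow> nat) \<Rightarrow> 'k::field" where
  "msign n a b = (-1) ^ (\<Sum>i\<in>{1..n}. \<Sum>j\<in>{1..n}. if j < i then a i * b j else 0)"

definition amult :: "nat \<Rightarrow> ('k::field) skel \<Rightarrow> 'k skel \<Rightarrow> 'k skel" where
  "amult n f g = (\<lambda>c. if c \<in> expvecs n then
      (\<Sum>a\<in>{a\<in>expvecs n. \<forall>i. a i \<le> c i}. msign n a (\<lambda>i. c i - a i) * f a * g (\<lambda>i. c i - a i))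
     else 0)"

definition aadd :: "('k::field) skel \<Rightarrow> 'k skel \<Rightarrow> 'k skel" where
  "aadd f g = (\<lambda>a. f a + g a)"

definition ascale :: "'k::field \<Rightarrow> 'k skel \<Rightarrow> 'k skel" where
  "ascale c f = (\<lambda>a. c * f a)"

definition mon :: "(nat \<Rightarrow> nat) \<Rightarrow> ('k::field) skel" where
  "mon a = (\<lambda>b. if b = a then 1 else 0)"

definition X :: "nat \<Rightarrow> ('k::field) skel" where
  "X i = mon (\<lambda>j. if j = i then 1 else 0)"

definition Agr :: "nat \<Rightarrow> nat \<Rightarrow> ('k::field) skel set" where
  "Agr n d = {f \<in> Acar n. \<forall>a. f a \<noteq> 0 \<longrightarrow> mdeg n a = d}"

text \<open>Graded algebra automorphisms of A (as maps on the carrier; extended by the identity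
  outside the carrier so that equality of maps is equality of automorphisms).\<close>
definition graded_aut :: "nat \<Rightarrow> (('k::field) skel \<Rightarrow> 'k skel) \<Rightarrow> bool" where
  "graded_aut n g \<longleftrightarrow>
     bij_betw g (Acar n) (Acar n) \<and>
     (\<forall>f\<in>Acar n. \<forall>h\<in>Acar n. g (aadd f h) = aadd (g f) (g h)) \<and>
     (\<forall>c. \<forall>f\<in>Acar n. g (ascale c f) = ascale c (g f)) \<and>
     (\<forall>f\<in>Acar n. \<forall>h\<in>Acar n. g (amult n f h) = amult n (g f) (g h)) \<and>
     g (mon (\<lambda>_. 0)) = mon (\<lambda>_. 0) \<and>
     (\<forall>d. g ` Agr n d \<subseteq> Agr n d) \<and>
     (\<forall>f. f \<notin> Acar n \<longrightarrow> g f = f)"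

definition gtrace :: "nat \<Rightarrow> (('k::field) skel \<Rightarrow> 'k skel) \<Rightarrow> nat \<Rightarrow> 'k" where
  "gtrace n g d = (\<Sum>a\<in>{a\<in>expvecs n. mdeg n a = d}. g (mon a) a)"

definition quasi_reflection :: "nat \<Rightarrow> (('k::field) skel \<Rightarrow> 'k skel) \<Rightarrow> bool" where
  "quasi_reflection n g \<longleftrightarrow> graded_aut n g \<and>
     (\<exists>c. c \<noteq> 1 \<and> Abs_fps (gtrace n g) =
        inverse ((1 - fps_X) ^ (n - 1) * (1 - fps_const c * fps_X)))"

definition aut_subgroup :: "nat \<Rightarrow> (('k::field) skel \<Rightarrow> 'k skel) set \<Rightarrow> bool" where
  "aut_subgroup n G \<longleftrightarrow> (\<forall>g\<in>G. graded_aut n g) \<and> id \<in> G \<and>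
     (\<forall>g\<in>G. \<forall>h\<in>G. g \<circ> h \<in> G) \<and> (\<forall>g\<in>G. \<exists>h\<in>G. h \<circ> g = id \<and> g \<circ> h = id)"

inductive_set gen_group :: "nat \<Rightarrow> (('k::field) skel \<Rightarrow> 'k skel) set
    \<Rightarrow> (('k::field) skel \<Rightarrow> 'k skel) set" for n Q where
  gen_id: "id \<in> gen_group n Q"
| gen_base: "q \<in> Q \<Longrightarrow> q \<in> gen_group n Q"
| gen_comp: "g \<in> gen_group n Q \<Longrightarrow> h \<in> gen_group n Q \<Longrightarrow> g \<circ> h \<in> gen_group n Q"
| gen_inv: "g \<in> gen_group n Q \<Longrightarrow> graded_aut n h \<Longrightarrow> h \<circ> g = id \<Longrightarrow> h \<in> gen_group n Q"

text \<open>g equals theta_{s,lambda} / tau_{s,t,lambda} / s_{s,t,lambda}: a graded automorphism is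
  determined by its values on the generators x_1..x_n.\<close>
definition is_theta :: "nat \<Rightarrow> (('k::field) skel \<Rightarrow> 'k skel) \<Rightarrow> nat \<Rightarrow> 'k \<Rightarrow> bool" where
  "is_theta n g s l \<longleftrightarrow> g (X s) = ascale l (X s) \<and> (\<forall>i\<in>{1..n}. i \<noteq> s \<longrightarrow> g (X i) = X i)"

definition is_tau :: "nat \<Rightarrow> (('k::field) skel \<Rightarrow> 'k skel) \<Rightarrow> nat \<Rightarrow> nat \<Rightarrow> 'k \<Rightarrow> bool" where
  "is_tau n g s t l \<longleftrightarrow> g (X s) = ascale l (X t) \<and> g (X t) = ascale (- inverse l) (X s) \<and>
     (\<forall>i\<in>{1..n}. i \<noteq> s \<and> i \<noteq> t \<longrightarrow> g (X i) = X i)"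

definition is_s :: "nat \<Rightarrow> (('k::field) skel \<Rightarrow> 'k skel) \<Rightarrow> nat \<Rightarrow> nat \<Rightarrow> 'k \<Rightarrow> bool" where
  "is_s n g s t l \<longleftrightarrow> g (X s) = ascale l (X s) \<and> g (X t) = ascale (inverse l) (X t) \<and>
     (\<forall>i\<in>{1..n}. i \<noteq> s \<and> i \<noteq> t \<longrightarrow> g (X i) = X i)"

definition Theta_set :: "nat \<Rightarrow> (('k::field) skel \<Rightarrow> 'k skel) set \<Rightarrow> nat \<Rightarrow> 'k set" where
  "Theta_set n G i = {l. l \<noteq> 0 \<and> (\<exists>g\<in>G. is_theta n g i l)}"

definition T_set :: "nat \<Rightarrow> (('k::field) skel \<Rightarrow> 'k skel) set \<Rightarrow> nat \<Rightarrow> nat \<Rightarrow> 'k set" where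
  "T_set n G i j = {l. l \<noteq> 0 \<and> (\<exists>g\<in>G. is_tau n g i j l)}"

definition S_set :: "nat \<Rightarrow> (('k::field) skel \<Rightarrow> 'k skel) set \<Rightarrow> nat \<Rightarrow> nat \<Rightarrow> 'k set" where
  "S_set n G i j = {l. l \<noteq> 0 \<and> (\<exists>g\<in>G. is_s n g i j l)}"

definition is_circle :: "nat \<Rightarrow> (('k::field) skel \<Rightarrow> 'k skel) set \<Rightarrow> bool" where
  "is_circle n G \<longleftrightarrow> (\<forall>i\<in>{1..n}. \<forall>j\<in>{1..n}. i \<noteq> j \<longrightarrow>
     (i, j) \<in> {(a, b). a \<in> {1..n} \<and> b \<in> {1..n} \<and> a \<noteq> b \<and>
                        (\<exists>l. l \<noteq> 0 \<and> (\<exists>g\<in>G. is_tau n g a b l))}\<^sup>+)"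

definition cyclic_of_order :: "('k::field) set \<Rightarrow> nat \<Rightarrow> bool" where
  "cyclic_of_order H m \<longleftrightarrow> 0 < m \<and> finite H \<and> card H = m \<and>
     (\<exists>z. z \<noteq> 0 \<and> H = range (\<lambda>k::nat. z ^ k))"

definition alg_closed :: "'k::field itself \<Rightarrow> bool" where
  "alg_closed _ \<longleftrightarrow> (\<forall>p::'k poly. 0 < degree p \<longrightarrow> (\<exists>x. poly p x = 0))"

end

theory Submission
  imports Defs "HOL-Algebra.Multiplicative_Group"
begin

text \<open>
  Every automorphism occurring in the theorem acts monomially on the generators,
  so composition and inversion of such automorphisms is described by multiplying and inverting
  scalars. Consequently Theta_i and S_{i,j} are finite subgroups of k^*, and conjugating by the
  swaps tau_{i,j,1} in G moves the indices around: Theta_i = Theta_j, S_{i,j} = S_{i',j'} and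
  T_{i,j} = S_{i,j}. Finite subgroups of k^* are cyclic, tau_{i,j,1}^2 = s_{i,j,-1} forces
  |S_{i,j}| to be even, and theta_{i,l} theta_{j,l^{-1}} = s_{i,j,l} embeds Theta_i into
  S_{i,j}, so |Theta_i| divides |S_{i,j}| by Lagrange.
\<close>

text \<open>Counting argument: in a finite group with at most d solutions of x^d = 1 for every d,
  there are at most phi(d) elements of order d.\<close>
lemma (in group) card_elements_of_order_le_phi':
  assumes fin: "finite (carrier G)"
    and roots: "\<And>d. 0 < d \<Longrightarrow> card {x \<in> carrier G. x [^] d = \<one>} \<le> d"
  shows "card {x \<in> carrier G. ord x = d} \<le> phi' d"
proof (cases "\<exists>a\<in>carrier G. ord a = d")
  case False
  then have "{x \<in> carrier G. ord x = d} = {}" by blast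
  then show ?thesis by (metis card.empty zero_le)
next
  case True
  then obtain a where a: "a \<in> carrier G" and ord_a: "ord a = d" by blast
  have "0 < d" using ord_ge_1[OF fin a] ord_a by simp
  let ?pow = "\<lambda>k::nat. a [^] k"
  have card_pow: "card (?pow ` {1..d}) = d"
    using card_image[OF ord_inj'[OF a]] ord_a by simp
  have roots_eq: "?pow ` {1..d} = {x \<in> carrier G. x [^] d = \<one>}"
  proof (rule card_seteq)
    show "finite {x \<in> carrier G. x [^] d = \<one>}" using fin by simp
    have "(a [^] k) [^] d = \<one>" for k :: nat
      using a ord_a by (simp add: nat_pow_pow pow_eq_id)
    then show "?pow ` {1..d} \<subseteq> {x \<in> carrier G. x [^] d = \<one>}"
      using a by blast
    show "card {x \<in> carrier G. x [^] d = \<one>} \<le> card (?pow ` {1..d})"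
      using roots[OF \<open>0 < d\<close>] card_pow by simp
  qed
  have "{x \<in> carrier G. ord x = d} \<subseteq> ?pow ` {k \<in> {1..d}. coprime k d}"
  proof
    fix x assume x: "x \<in> {x \<in> carrier G. ord x = d}"
    then have "x \<in> ?pow ` {1..d}" using roots_eq by auto
    then obtain k where k: "k \<in> {1..d}" "x = a [^] k" by blast
    then have "coprime k d" using x pow_ord_eq_ord_iff[OF fin a] ord_a by simp
    then show "x \<in> ?pow ` {k \<in> {1..d}. coprime k d}" using k by blast
  qed
  then have "card {x \<in> carrier G. ord x = d} \<le> card (?pow ` {k \<in> {1..d}. coprime k d})"
    by (rule card_mono[rotated]) simp
  also have "\<dots> \<le> card {k \<in> {1..d}. coprime k d}" by (rule card_image_le) simp
  also have "\<dots> = phi' d" unfolding phi'_def by (rule arg_cong[where f = card]) auto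
  finally show ?thesis .
qed

text \<open>Hence such a group has an element whose order is the group order: summing over the
  divisors d of the order, the counts are bounded by phi(d) and add up to the sum of phi(d).\<close>
lemma (in group) generator_if_few_roots:
  assumes fin: "finite (carrier G)"
    and roots: "\<And>d. 0 < d \<Longrightarrow> card {x \<in> carrier G. x [^] d = \<one>} \<le> d"
  shows "\<exists>a\<in>carrier G. ord a = order G"
proof (rule ccontr)
  assume no_gen: "\<not> ?thesis"
  let ?N = "order G" and ?D = "{d. d dvd order G}"
  let ?count = "\<lambda>d. card {x \<in> carrier G. ord x = d}"
  have "0 < ?N" using fin order_gt_0_iff_finite by blast
  then have fin_D: "finite ?D" by simp
  have "carrier G = (\<Union>d\<in>?D. {x \<in> carrier G. ord x = d})"
    using ord_dvd_group_order by blast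
  then have "?N = card (\<Union>d\<in>?D. {x \<in> carrier G. ord x = d})"
    unfolding order_def by simp
  also have "\<dots> = (\<Sum>d\<in>?D. ?count d)"
    by (rule card_UN_disjoint) (use fin fin_D in auto)
  also have "\<dots> < (\<Sum>d\<in>?D. phi' d)"
  proof (rule sum_strict_mono_ex1[OF fin_D])
    show "\<forall>d\<in>?D. ?count d \<le> phi' d" using card_elements_of_order_le_phi'[OF fin roots] by blast
    have "{x \<in> carrier G. ord x = ?N} = {}" using no_gen by blast
    then have "?count ?N = 0" by (metis card.empty)
    then show "\<exists>d\<in>?D. ?count d < phi' d"
      using phi'_nonzero[OF \<open>0 < ?N\<close>] by (intro bexI[of _ ?N]) simp_all
  qed
  also have "\<dots> = ?N" using sum_phi'_factors[OF \<open>0 < ?N\<close>] .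
  finally show False by simp
qed

definition mult_subgroup :: "'k::field set \<Rightarrow> bool" where
  "mult_subgroup H \<longleftrightarrow> finite H \<and> 1 \<in> H \<and> 0 \<notin> H \<and>
     (\<forall>x\<in>H. \<forall>y\<in>H. x * y \<in> H) \<and> (\<forall>x\<in>H. inverse x \<in> H)"

lemma roots_of_unity_bound:
  assumes "0 < d"
  shows "finite {x::'k::field. x ^ d = 1}" and "card {x::'k::field. x ^ d = 1} \<le> d"
proof -
  define p :: "'k poly" where "p = Polynomial.monom 1 d + [:-1:]"
  have deg: "degree p = d"
    unfolding p_def using assms by (subst degree_add_eq_left) (simp_all add: degree_monom_eq)
  then have "p \<noteq> 0" using assms by auto
  moreover have "{x. x ^ d = 1} = {x. poly p x = 0}" by (auto simp: p_def poly_monom)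
  ultimately show "finite {x::'k. x ^ d = 1}" and "card {x::'k. x ^ d = 1} \<le> d"
    using poly_roots_finite[of p] card_poly_roots_bound[of p] deg by simp_all
qed

lemma mult_subgroup_generator:
  fixes H :: "'k::field set"
  assumes H: "mult_subgroup H"
  shows "\<exists>z\<in>H. H = range (\<lambda>k::nat. z ^ k) \<and> (\<forall>k. z ^ k = 1 \<longleftrightarrow> card H dvd k)"
proof -
  define Gr where "Gr = \<lparr>carrier = H, monoid.mult = (*), one = (1::'k)\<rparr>"
  have fin: "finite H" and one: "1 \<in> H" and nz: "0 \<notin> H"
    and mult: "\<And>x y. x \<in> H \<Longrightarrow> y \<in> H \<Longrightarrow> x * y \<in> H"
    and inv: "\<And>x. x \<in> H \<Longrightarrow> inverse x \<in> H"
    using H by (auto simp: mult_subgroup_def)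
  interpret Gr: group Gr
  proof (rule groupI)
    fix x assume "x \<in> carrier Gr"
    then have "inverse x \<in> H" "x \<noteq> 0" using inv nz by (auto simp: Gr_def)
    then show "\<exists>y\<in>carrier Gr. y \<otimes>\<^bsub>Gr\<^esub> x = \<one>\<^bsub>Gr\<^esub>"
      by (intro bexI[of _ "inverse x"]) (simp_all add: Gr_def)
  qed (auto simp: Gr_def one mult mult.assoc)
  have pow: "x [^]\<^bsub>Gr\<^esub> k = x ^ k" for x and k :: nat
    by (induct k) (simp_all add: Gr_def mult.commute)
  have carrier: "carrier Gr = H" and unit: "\<one>\<^bsub>Gr\<^esub> = 1" and order: "order Gr = card H"
    by (simp_all add: Gr_def order_def)
  have "card {x \<in> carrier Gr. x [^]\<^bsub>Gr\<^esub> d = \<one>\<^bsub>Gr\<^esub>} \<le> d" if "0 < d" for d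
  proof -
    have "{x \<in> carrier Gr. x [^]\<^bsub>Gr\<^esub> d = \<one>\<^bsub>Gr\<^esub>} \<subseteq> {x. x ^ d = 1}"
      by (auto simp: pow unit)
    then show ?thesis
      using roots_of_unity_bound[OF that] card_mono le_trans by blast
  qed
  then obtain z where z: "z \<in> H" "Gr.ord z = card H"
    using Gr.generator_if_few_roots fin carrier order by auto
  have range_sub: "range (\<lambda>k::nat. z ^ k) \<subseteq> H"
    using Gr.nat_pow_closed z(1) by (auto simp: pow carrier)
  have "(\<lambda>k. z ^ k) ` {1..card H} = H"
  proof (rule card_seteq[OF fin])
    show "(\<lambda>k. z ^ k) ` {1..card H} \<subseteq> H" using range_sub by blast
    show "card H \<le> card ((\<lambda>k. z ^ k) ` {1..card H})"
      using card_image[OF Gr.ord_inj'[of z]] z by (simp add: pow carrier)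
  qed
  then have "H = range (\<lambda>k::nat. z ^ k)" using range_sub by blast
  moreover have "z ^ k = 1 \<longleftrightarrow> card H dvd k" for k :: nat
    using Gr.pow_eq_id[of z k] z by (simp add: pow carrier unit)
  ultimately show ?thesis using z(1) by blast
qed

lemma mult_subgroup_cyclic_of_order:
  assumes "mult_subgroup H"
  shows "cyclic_of_order H (card H)"
proof -
  obtain z where z: "z \<in> H" "H = range (\<lambda>k::nat. z ^ k)"
    using mult_subgroup_generator[OF assms] by blast
  have "finite H" "1 \<in> H" "0 \<notin> H" using assms by (simp_all add: mult_subgroup_def)
  then have "0 < card H" "z \<noteq> 0" using z(1) card_gt_0_iff by auto
  then show ?thesis unfolding cyclic_of_order_def using z \<open>finite H\<close> by blast
qed

lemma mult_subgroup_pow_card: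
  assumes "mult_subgroup H" and "x \<in> H"
  shows "x ^ card H = 1"
proof -
  obtain z where z: "H = range (\<lambda>k::nat. z ^ k)" "\<forall>k. z ^ k = 1 \<longleftrightarrow> card H dvd k"
    using mult_subgroup_generator[OF assms(1)] by blast
  obtain k where "x = z ^ k" using assms(2) z(1) by auto
  then have "x ^ card H = (z ^ card H) ^ k" by (metis power_mult mult.commute)
  also have "\<dots> = 1" using z(2) dvd_refl by (metis power_one)
  finally show ?thesis .
qed

lemma mult_subgroup_card_dvd:
  assumes H: "mult_subgroup H" and K: "mult_subgroup K" and sub: "H \<subseteq> K"
  shows "card H dvd card K"
proof -
  obtain z where "z \<in> H" and ord_z: "\<forall>k. z ^ k = 1 \<longleftrightarrow> card H dvd k"
    using mult_subgroup_generator[OF H] by blast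
  then have "z ^ card K = 1" using mult_subgroup_pow_card[OF K] sub by blast
  then show ?thesis using ord_z by blast
qed

text \<open>In characteristic zero, -1 has order 2, so a multiplicative subgroup containing it has
  even cardinality.\<close>
lemma mult_subgroup_even_card:
  fixes H :: "'k::field_char_0 set"
  assumes "mult_subgroup H" and "-1 \<in> H"
  shows "even (card H)"
proof (rule ccontr)
  assume "odd (card H)"
  then have "(-1::'k) ^ card H = -1" by simp
  moreover have "(-1::'k) ^ card H = 1" using mult_subgroup_pow_card[OF assms] .
  ultimately show False by simp
qed

definition sends :: "('k::field skel \<Rightarrow> 'k skel) \<Rightarrow> nat \<Rightarrow> 'k \<Rightarrow> nat \<Rightarrow> bool" where
  "sends g a c b \<longleftrightarrow> g (X a) = ascale c (X b)"

definition fixes_outside :: "nat \<Rightarrow> ('k::field skel \<Rightarrow> 'k skel) \<Rightarrow> nat set \<Rightarrow> bool" where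
  "fixes_outside n g I \<longleftrightarrow> (\<forall>k\<in>{1..n} - I. sends g k 1 k)"

lemma ascale_one [simp]: "ascale 1 f = f"
  by (simp add: ascale_def)

lemma ascale_ascale [simp]: "ascale c (ascale d f) = ascale (c * d) f"
  by (simp add: ascale_def mult.assoc)

lemma fixes_outside_iff:
  "fixes_outside n g I \<longleftrightarrow> (\<forall>k\<in>{1..n}. k \<notin> I \<longrightarrow> g (X k) = X k)"
  by (auto simp: fixes_outside_def sends_def)

lemma fixesD: "fixes_outside n g I \<Longrightarrow> k \<in> {1..n} \<Longrightarrow> k \<notin> I \<Longrightarrow> sends g k 1 k"
  by (simp add: fixes_outside_def)

lemma Theta_set_iff:
  "l \<in> Theta_set n G i \<longleftrightarrow> l \<noteq> 0 \<and> (\<exists>g\<in>G. sends g i l i \<and> fixes_outside n g {i})"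
  by (auto simp: Theta_set_def is_theta_def sends_def fixes_outside_iff)

lemma S_set_iff:
  "l \<in> S_set n G i j \<longleftrightarrow> l \<noteq> 0 \<and>
     (\<exists>g\<in>G. sends g i l i \<and> sends g j (inverse l) j \<and> fixes_outside n g {i, j})"
  by (auto simp: S_set_def is_s_def sends_def fixes_outside_iff)

lemma T_set_iff:
  "l \<in> T_set n G i j \<longleftrightarrow> l \<noteq> 0 \<and>
     (\<exists>g\<in>G. sends g i l j \<and> sends g j (- inverse l) i \<and> fixes_outside n g {i, j})"
  by (auto simp: T_set_def is_tau_def sends_def fixes_outside_iff)

lemma X_in_Acar: "i \<in> {1..n} \<Longrightarrow> (X i :: 'k::field skel) \<in> Acar n"
  by (auto simp: Acar_def Defs.X_def Defs.mon_def expvecs_def)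

lemma ascale_X_coeff: "ascale c (X b) (\<lambda>j. if j = b then 1 else 0) = (c::'k::field)"
  by (simp add: ascale_def Defs.X_def Defs.mon_def)

lemma aut_ascale: "graded_aut n h \<Longrightarrow> f \<in> Acar n \<Longrightarrow> h (ascale c f) = ascale c (h f)"
  unfolding graded_aut_def by blast

lemma sends_id: "sends id a 1 a"
  by (simp add: sends_def ascale_def)

lemma sends_comp:
  assumes h: "graded_aut n h" and b: "b \<in> {1..n}"
    and "sends g a c b" "sends h b d e"
  shows "sends (h \<circ> g) a (d * c) e"
  using assms aut_ascale[OF h X_in_Acar[OF b]] by (simp add: sends_def mult.commute)

lemma sends_inv:
  assumes h: "graded_aut n h" and hg: "h \<circ> g = id" and b: "b \<in> {1..n}"
    and g: "sends g a c b" and "c \<noteq> 0"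
  shows "sends h b (inverse c) a"
proof -
  have "X a = h (g (X a))" using hg by (metis comp_apply id_apply)
  also have "\<dots> = ascale c (h (X b))"
    using g aut_ascale[OF h X_in_Acar[OF b]] unfolding sends_def by simp
  finally have "ascale (inverse c) (X a) = ascale (inverse c) (ascale c (h (X b)))" by simp
  then show ?thesis using \<open>c \<noteq> 0\<close> by (simp add: sends_def)
qed

lemma sends_conj:
  assumes "graded_aut n g" "graded_aut n t" "b \<in> {1..n}" "c \<in> {1..n}"
    and "sends h a x b" "sends g b y c" "sends t c z d"
  shows "sends (t \<circ> g \<circ> h) a (z * y * x) d"
  using sends_comp[OF assms(2,4) sends_comp[OF assms(1,3,5,6)] assms(7)]
  by (simp add: comp_assoc mult.assoc)

lemma fixes_outside_comp:
  assumes "graded_aut n h" "fixes_outside n g I" "fixes_outside n h J"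
  shows "fixes_outside n (h \<circ> g) (I \<union> J)"
  using assms sends_comp[OF assms(1)] unfolding fixes_outside_def by fastforce

lemma fixes_outside_inv:
  assumes "graded_aut n h" "h \<circ> g = id" "fixes_outside n g I"
  shows "fixes_outside n h I"
  using assms sends_inv[OF assms(1,2)] unfolding fixes_outside_def by fastforce

lemma fixes_outside_remove:
  assumes "fixes_outside n g (insert a I)" "a \<in> {1..n} \<Longrightarrow> sends g a 1 a"
  shows "fixes_outside n g I"
  using assms unfolding fixes_outside_def by blast

lemma fixes_outside_conj:
  assumes "graded_aut n g" "graded_aut n t"
    and "fixes_outside n h I" "fixes_outside n g J" "fixes_outside n t K"
  shows "fixes_outside n (t \<circ> g \<circ> h) (I \<union> J \<union> K)"
  using fixes_outside_comp[OF assms(2) fixes_outside_comp[OF assms(1,3,4)] assms(5)]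
  by (simp add: comp_assoc)

lemma finite_sends_scalars:
  assumes "finite G"
  shows "finite {l. \<exists>g\<in>G. sends g a l b}"
proof -
  have "{l. \<exists>g\<in>G. sends g a l b} \<subseteq> (\<lambda>g. g (X a) (\<lambda>j. if j = b then 1 else 0)) ` G"
    by (auto simp: sends_def ascale_X_coeff intro!: rev_image_eqI)
  then show ?thesis using assms finite_subset by blast
qed

locale finite_aut_group =
  fixes n :: nat and G :: "('k::field skel \<Rightarrow> 'k skel) set"
  assumes subgroup: "aut_subgroup n G" and finite_G: "finite G"
begin

lemma G_aut: "g \<in> G \<Longrightarrow> graded_aut n g"
  using subgroup by (simp add: aut_subgroup_def)

lemma G_id: "id \<in> G"
  using subgroup by (simp add: aut_subgroup_def)

lemma G_comp: "g \<in> G \<Longrightarrow> h \<in> G \<Longrightarrow> h \<circ> g \<in> G"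
  using subgroup by (simp add: aut_subgroup_def)

lemma G_inv: "g \<in> G \<Longrightarrow> \<exists>h\<in>G. h \<circ> g = id"
  using subgroup unfolding aut_subgroup_def by blast

text \<open>Theta_i is a finite subgroup of k^*: theta_{i,m} \<circ> theta_{i,l} = theta_{i,lm}.\<close>
lemma Theta_mult_subgroup:
  assumes i: "i \<in> {1..n}"
  shows "mult_subgroup (Theta_set n G i)"
  unfolding mult_subgroup_def
proof (intro conjI ballI)
  show "finite (Theta_set n G i)"
    using finite_sends_scalars[OF finite_G, of i i]
    by (rule finite_subset[rotated]) (auto simp: Theta_set_iff)
  show "1 \<in> Theta_set n G i" using G_id sends_id by (auto simp: Theta_set_iff fixes_outside_def)
  show "0 \<notin> Theta_set n G i" by (simp add: Theta_set_iff)
next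
  fix l m assume "l \<in> Theta_set n G i" "m \<in> Theta_set n G i"
  then obtain g h where g: "l \<noteq> 0" "g \<in> G" "sends g i l i" "fixes_outside n g {i}"
    and h: "m \<noteq> 0" "h \<in> G" "sends h i m i" "fixes_outside n h {i}"
    by (auto simp: Theta_set_iff)
  have "sends (h \<circ> g) i (l * m) i"
    using sends_comp[OF G_aut[OF h(2)] i g(3) h(3)] by (simp add: mult.commute)
  moreover have "fixes_outside n (h \<circ> g) {i}"
    using fixes_outside_comp[OF G_aut[OF h(2)] g(4) h(4)] by simp
  ultimately show "l * m \<in> Theta_set n G i"
    using g(1) h(1) G_comp[OF g(2) h(2)] by (auto simp: Theta_set_iff)
next
  fix l assume "l \<in> Theta_set n G i"
  then obtain g where g: "l \<noteq> 0" "g \<in> G" "sends g i l i" "fixes_outside n g {i}"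
    by (auto simp: Theta_set_iff)
  obtain h where h: "h \<in> G" "h \<circ> g = id" using G_inv g(2) by blast
  have "sends h i (inverse l) i" by (rule sends_inv[OF G_aut[OF h(1)] h(2) i g(3) g(1)])
  moreover have "fixes_outside n h {i}" by (rule fixes_outside_inv[OF G_aut[OF h(1)] h(2) g(4)])
  ultimately show "inverse l \<in> Theta_set n G i"
    using g(1) h(1) by (auto simp: Theta_set_iff)
qed

text \<open>Likewise S_{i,j} is a finite subgroup of k^*: s_{i,j,m} \<circ> s_{i,j,l} = s_{i,j,lm}.\<close>
lemma S_mult_subgroup:
  assumes i: "i \<in> {1..n}" and j: "j \<in> {1..n}"
  shows "mult_subgroup (S_set n G i j)"
  unfolding mult_subgroup_def
proof (intro conjI ballI)
  show "finite (S_set n G i j)"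
    using finite_sends_scalars[OF finite_G, of i i]
    by (rule finite_subset[rotated]) (auto simp: S_set_iff)
  show "1 \<in> S_set n G i j" using G_id sends_id by (auto simp: S_set_iff fixes_outside_def)
  show "0 \<notin> S_set n G i j" by (simp add: S_set_iff)
next
  fix l m assume "l \<in> S_set n G i j" "m \<in> S_set n G i j"
  then obtain g h where
        g: "l \<noteq> 0" "g \<in> G" "sends g i l i" "sends g j (inverse l) j" "fixes_outside n g {i, j}"
    and h: "m \<noteq> 0" "h \<in> G" "sends h i m i" "sends h j (inverse m) j" "fixes_outside n h {i, j}"
    by (auto simp: S_set_iff)
  have "sends (h \<circ> g) i (l * m) i"
    using sends_comp[OF G_aut[OF h(2)] i g(3) h(3)] by (simp add: mult.commute)
  moreover have "sends (h \<circ> g) j (inverse (l * m)) j"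
    using sends_comp[OF G_aut[OF h(2)] j g(4) h(4)] by (simp add: mult.commute)
  moreover have "fixes_outside n (h \<circ> g) {i, j}"
    using fixes_outside_comp[OF G_aut[OF h(2)] g(5) h(5)] by simp
  ultimately show "l * m \<in> S_set n G i j"
    using g(1) h(1) G_comp[OF g(2) h(2)] by (auto simp: S_set_iff)
next
  fix l assume "l \<in> S_set n G i j"
  then obtain g where
    g: "l \<noteq> 0" "g \<in> G" "sends g i l i" "sends g j (inverse l) j" "fixes_outside n g {i, j}"
    by (auto simp: S_set_iff)
  obtain h where h: "h \<in> G" "h \<circ> g = id" using G_inv g(2) by blast
  have "sends h i (inverse l) i" by (rule sends_inv[OF G_aut[OF h(1)] h(2) i g(3) g(1)])
  moreover have "sends h j (inverse (inverse l)) j"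
    using sends_inv[OF G_aut[OF h(1)] h(2) j g(4)] g(1) by simp
  moreover have "fixes_outside n h {i, j}" by (rule fixes_outside_inv[OF G_aut[OF h(1)] h(2) g(5)])
  ultimately show "inverse l \<in> S_set n G i j"
    using g(1) h(1) by (auto simp: S_set_iff)
qed

lemma S_swap: "l \<in> S_set n G i j \<Longrightarrow> inverse l \<in> S_set n G j i"
  by (auto simp: S_set_iff insert_commute)

lemma S_sym:
  assumes "i \<in> {1..n}" "j \<in> {1..n}" "l \<in> S_set n G i j"
  shows "l \<in> S_set n G j i"
proof -
  have "inverse l \<in> S_set n G i j"
    using S_mult_subgroup[OF assms(1,2)] assms(3) by (simp add: mult_subgroup_def)
  then show ?thesis using S_swap by fastforce
qed

text \<open>The inverse of tau_{i,j,l} is tau_{j,i,l^{-1}}.\<close>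
lemma T_swap:
  assumes i: "i \<in> {1..n}" and j: "j \<in> {1..n}" and l: "l \<in> T_set n G i j"
  shows "inverse l \<in> T_set n G j i"
proof -
  obtain g where
    g: "l \<noteq> 0" "g \<in> G" "sends g i l j" "sends g j (- inverse l) i" "fixes_outside n g {i, j}"
    using l by (auto simp: T_set_iff)
  obtain h where h: "h \<in> G" "h \<circ> g = id" using G_inv g(2) by blast
  have "sends h j (inverse l) i" by (rule sends_inv[OF G_aut[OF h(1)] h(2) j g(3) g(1)])
  moreover have "sends h i (- inverse (inverse l)) j"
    using sends_inv[OF G_aut[OF h(1)] h(2) i g(4)] g(1) by (simp add: inverse_minus_eq)
  moreover have "fixes_outside n h {j, i}"
    using fixes_outside_inv[OF G_aut[OF h(1)] h(2) g(5)] by (simp add: insert_commute)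
  ultimately show ?thesis
    using g(1) h(1) by (auto simp: T_set_iff)
qed

text \<open>tau_{i,j,1} squares to s_{i,j,-1}.\<close>
lemma minus_one_in_S:
  assumes i: "i \<in> {1..n}" and j: "j \<in> {1..n}" and T: "1 \<in> T_set n G i j"
  shows "-1 \<in> S_set n G i j"
proof -
  obtain t where t: "t \<in> G" "sends t i 1 j" "sends t j (-1) i" "fixes_outside n t {i, j}"
    using T by (auto simp: T_set_iff)
  have "sends (t \<circ> t) i (-1) i"
    using sends_comp[OF G_aut[OF t(1)] j t(2) t(3)] by simp
  moreover have "sends (t \<circ> t) j (inverse (-1)) j"
    using sends_comp[OF G_aut[OF t(1)] i t(3) t(2)] by simp
  moreover have "fixes_outside n (t \<circ> t) {i, j}"
    using fixes_outside_comp[OF G_aut[OF t(1)] t(4) t(4)] by simp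
  ultimately show ?thesis using G_comp[OF t(1) t(1)] by (auto simp: S_set_iff)
qed

text \<open>theta_{j,l^{-1}} \<circ> theta_{i,l} = s_{i,j,l}.\<close>
lemma Theta_product_in_S:
  assumes i: "i \<in> {1..n}" and j: "j \<in> {1..n}" and ij: "i \<noteq> j"
    and l: "l \<in> Theta_set n G i" and l': "inverse l \<in> Theta_set n G j"
  shows "l \<in> S_set n G i j"
proof -
  obtain g where g: "l \<noteq> 0" "g \<in> G" "sends g i l i" "fixes_outside n g {i}"
    using l by (auto simp: Theta_set_iff)
  obtain h where h: "h \<in> G" "sends h j (inverse l) j" "fixes_outside n h {j}"
    using l' by (auto simp: Theta_set_iff)
  have "sends (h \<circ> g) i l i"
    using sends_comp[OF G_aut[OF h(1)] i g(3) fixesD[OF h(3) i]] ij by simp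
  moreover have "sends (h \<circ> g) j (inverse l) j"
    using sends_comp[OF G_aut[OF h(1)] j fixesD[OF g(4) j] h(2)] ij by simp
  moreover have "fixes_outside n (h \<circ> g) {i, j}"
    using fixes_outside_comp[OF G_aut[OF h(1)] g(4) h(3)] by (simp add: insert_commute)
  ultimately show ?thesis using g(1) G_comp[OF g(2) h(1)] by (auto simp: S_set_iff)
qed

text \<open>Conjugating theta_{i,l} by tau_{i,j,1} gives theta_{j,l}.\<close>
lemma Theta_conj:
  assumes i: "i \<in> {1..n}" and j: "j \<in> {1..n}" and ij: "i \<noteq> j"
    and T: "1 \<in> T_set n G i j" and l: "l \<in> Theta_set n G i"
  shows "l \<in> Theta_set n G j"
proof -
  obtain t where t: "t \<in> G" "sends t i 1 j" "sends t j (-1) i" "fixes_outside n t {i, j}"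
    using T by (auto simp: T_set_iff)
  obtain h where h: "h \<in> G" "sends h j 1 i" "sends h i (-1) j" "fixes_outside n h {j, i}"
    using T_swap[OF i j T] by (auto simp: T_set_iff)
  obtain g where g: "l \<noteq> 0" "g \<in> G" "sends g i l i" "fixes_outside n g {i}"
    using l by (auto simp: Theta_set_iff)
  let ?f = "t \<circ> g \<circ> h"
  have "?f \<in> G" using G_comp[OF G_comp[OF h(1) g(2)] t(1)] by (simp add: comp_assoc)
  note conj = sends_conj[OF G_aut[OF g(2)] G_aut[OF t(1)]]
  have "sends ?f j l j" using conj[OF i i h(2) g(3) t(2)] by simp
  moreover have "fixes_outside n ?f {j}"
  proof (rule fixes_outside_remove)
    show "fixes_outside n ?f (insert i {j})"
      using fixes_outside_conj[OF G_aut[OF g(2)] G_aut[OF t(1)] h(4) g(4) t(4)]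
      by (simp add: insert_commute)
    show "sends ?f i 1 i" using conj[OF j j h(3) fixesD[OF g(4) j] t(3)] ij by simp
  qed
  ultimately show ?thesis using g(1) \<open>?f \<in> G\<close> by (auto simp: Theta_set_iff)
qed

text \<open>Conjugating s_{i,j,l} by tau_{j,k,1} gives s_{i,k,l}.\<close>
lemma S_conj:
  assumes i: "i \<in> {1..n}" and j: "j \<in> {1..n}" and k: "k \<in> {1..n}"
    and ij: "i \<noteq> j" and ik: "i \<noteq> k" and jk: "j \<noteq> k"
    and T: "1 \<in> T_set n G j k" and l: "l \<in> S_set n G i j"
  shows "l \<in> S_set n G i k"
proof -
  obtain t where t: "t \<in> G" "sends t j 1 k" "sends t k (-1) j" "fixes_outside n t {j, k}"
    using T by (auto simp: T_set_iff)
  obtain h where h: "h \<in> G" "sends h k 1 j" "sends h j (-1) k" "fixes_outside n h {k, j}"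
    using T_swap[OF j k T] by (auto simp: T_set_iff)
  obtain g where
    g: "l \<noteq> 0" "g \<in> G" "sends g i l i" "sends g j (inverse l) j" "fixes_outside n g {i, j}"
    using l by (auto simp: S_set_iff)
  let ?f = "t \<circ> g \<circ> h"
  have "?f \<in> G" using G_comp[OF G_comp[OF h(1) g(2)] t(1)] by (simp add: comp_assoc)
  note conj = sends_conj[OF G_aut[OF g(2)] G_aut[OF t(1)]]
  have "sends ?f i l i"
    using conj[OF i i fixesD[OF h(4) i] g(3) fixesD[OF t(4) i]] ij ik by simp
  moreover have "sends ?f k (inverse l) k" using conj[OF j j h(2) g(4) t(2)] by simp
  moreover have "fixes_outside n ?f {i, k}"
  proof (rule fixes_outside_remove)
    show "fixes_outside n ?f (insert j {i, k})"
      using fixes_outside_conj[OF G_aut[OF g(2)] G_aut[OF t(1)] h(4) g(5) t(4)]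
      by (simp add: insert_commute)
    show "sends ?f j 1 j" using conj[OF k k h(3) fixesD[OF g(5) k] t(3)] ik jk by simp
  qed
  ultimately show ?thesis using g(1) \<open>?f \<in> G\<close> by (auto simp: S_set_iff)
qed

text \<open>tau_{i,j,l} \<circ> tau_{j,i,1} = s_{j,i,l}, hence T_{i,j} \<subseteq> S_{i,j}.\<close>
lemma T_subset_S:
  assumes i: "i \<in> {1..n}" and j: "j \<in> {1..n}"
    and T: "1 \<in> T_set n G i j" and l: "l \<in> T_set n G i j"
  shows "l \<in> S_set n G i j"
proof -
  obtain h where h: "h \<in> G" "sends h j 1 i" "sends h i (-1) j" "fixes_outside n h {j, i}"
    using T_swap[OF i j T] by (auto simp: T_set_iff)
  obtain g where
    g: "l \<noteq> 0" "g \<in> G" "sends g i l j" "sends g j (- inverse l) i" "fixes_outside n g {i, j}"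
    using l by (auto simp: T_set_iff)
  have "sends (g \<circ> h) j l j" using sends_comp[OF G_aut[OF g(2)] i h(2) g(3)] by simp
  moreover have "sends (g \<circ> h) i (inverse l) i"
    using sends_comp[OF G_aut[OF g(2)] j h(3) g(4)] by simp
  moreover have "fixes_outside n (g \<circ> h) {j, i}"
    using fixes_outside_comp[OF G_aut[OF g(2)] h(4) g(5)] by (simp add: insert_commute)
  ultimately have "l \<in> S_set n G j i"
    using g(1) G_comp[OF h(1) g(2)] by (auto simp: S_set_iff)
  then show ?thesis using S_sym[OF j i] by blast
qed

text \<open>s_{j,i,l} \<circ> tau_{i,j,1} = tau_{i,j,l}, hence S_{i,j} \<subseteq> T_{i,j}.\<close>
lemma S_subset_T:
  assumes i: "i \<in> {1..n}" and j: "j \<in> {1..n}"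
    and T: "1 \<in> T_set n G i j" and l: "l \<in> S_set n G i j"
  shows "l \<in> T_set n G i j"
proof -
  obtain t where t: "t \<in> G" "sends t i 1 j" "sends t j (-1) i" "fixes_outside n t {i, j}"
    using T by (auto simp: T_set_iff)
  obtain g where
    g: "l \<noteq> 0" "g \<in> G" "sends g j l j" "sends g i (inverse l) i" "fixes_outside n g {j, i}"
    using S_sym[OF i j l] by (auto simp: S_set_iff)
  have "sends (g \<circ> t) i l j" using sends_comp[OF G_aut[OF g(2)] j t(2) g(3)] by simp
  moreover have "sends (g \<circ> t) j (- inverse l) i"
    using sends_comp[OF G_aut[OF g(2)] i t(3) g(4)] by simp
  moreover have "fixes_outside n (g \<circ> t) {i, j}"
    using fixes_outside_comp[OF G_aut[OF g(2)] t(4) g(5)] by (simp add: insert_commute)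
  ultimately show ?thesis using g(1) G_comp[OF t(1) g(2)] by (auto simp: T_set_iff)
qed

end

locale swap_aut_group = finite_aut_group +
  assumes tau_one: "i \<in> {1..n} \<Longrightarrow> j \<in> {1..n} \<Longrightarrow> i \<noteq> j \<Longrightarrow> 1 \<in> T_set n G i j"
begin

lemma Theta_eq:
  assumes "i \<in> {1..n}" "j \<in> {1..n}"
  shows "Theta_set n G i = Theta_set n G j"
  using Theta_conj[OF assms _ tau_one] Theta_conj[OF assms(2,1) _ tau_one] assms by blast

lemma S_subset_second:
  assumes "i \<in> {1..n}" "j \<in> {1..n}" "k \<in> {1..n}" "i \<noteq> j" "i \<noteq> k"
  shows "S_set n G i j \<subseteq> S_set n G i k"
  using S_conj[OF assms _ tau_one] assms by (cases "j = k") blast+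

text \<open>Moving both indices, through S_{i,j} \<subseteq> S_{i,i'} \<subseteq> S_{i',i} \<subseteq> S_{i',j'}.\<close>
lemma S_subset:
  assumes i: "i \<in> {1..n}" and j: "j \<in> {1..n}" and i': "i' \<in> {1..n}" and j': "j' \<in> {1..n}"
    and "i \<noteq> j" "i' \<noteq> j'"
  shows "S_set n G i j \<subseteq> S_set n G i' j'"
proof (cases "i' = i")
  case True
  then show ?thesis using S_subset_second[OF i j j'] assms by simp
next
  case False
  have "S_set n G i j \<subseteq> S_set n G i i'" using S_subset_second[OF i j i'] False assms by simp
  also have "\<dots> \<subseteq> S_set n G i' i" using S_sym[OF i i'] by blast
  also have "\<dots> \<subseteq> S_set n G i' j'" using S_subset_second[OF i' i j'] False assms by simp
  finally show ?thesis .
qed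

lemma S_eq:
  assumes "i \<in> {1..n}" "j \<in> {1..n}" "i' \<in> {1..n}" "j' \<in> {1..n}" "i \<noteq> j" "i' \<noteq> j'"
  shows "S_set n G i j = S_set n G i' j'"
  using S_subset[OF assms] S_subset[OF assms(3,4,1,2,6,5)] by blast

lemma T_eq_S:
  assumes "i \<in> {1..n}" "j \<in> {1..n}" "i \<noteq> j"
  shows "T_set n G i j = S_set n G i j"
  using T_subset_S[OF assms(1,2) tau_one[OF assms]] S_subset_T[OF assms(1,2) tau_one[OF assms]]
  by blast

lemma T_eq:
  assumes "i \<in> {1..n}" "j \<in> {1..n}" "i' \<in> {1..n}" "j' \<in> {1..n}" "i \<noteq> j" "i' \<noteq> j'"
  shows "T_set n G i j = T_set n G i' j'"
  using T_eq_S[OF assms(1,2,5)] T_eq_S[OF assms(3,4,6)] S_eq[OF assms] by simp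

text \<open>theta_{i,l} \<circ> theta_{j,l^{-1}} = s_{i,j,l}, as Theta_j = Theta_i is closed under inverses.\<close>
lemma Theta_subset_S:
  assumes i: "i \<in> {1..n}" and j: "j \<in> {1..n}" and ij: "i \<noteq> j"
  shows "Theta_set n G i \<subseteq> S_set n G i j"
proof
  fix l assume l: "l \<in> Theta_set n G i"
  then have "inverse l \<in> Theta_set n G j"
    using Theta_mult_subgroup[OF i] Theta_eq[OF i j] by (simp add: mult_subgroup_def)
  then show "l \<in> S_set n G i j" by (rule Theta_product_in_S[OF i j ij l])
qed

end

text \<open>The theorem, with alpha = |Theta_1| and beta = |S_{1,2}|.\<close>
theorem lemma4p2:
  fixes n :: nat and G :: "(('k::field_char_0) skel \<Rightarrow> 'k skel) set"
  assumes "alg_closed TYPE('k)"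
    and "2 \<le> n"
    and "aut_subgroup n G" and "finite G"
    and "G = gen_group n {g\<in>G. quasi_reflection n g}"
    and "is_circle n G"
    and "\<forall>i\<in>{1..n}. \<forall>j\<in>{1..n}. i \<noteq> j \<longrightarrow> (\<exists>g\<in>G. is_tau n g i j 1)"
  shows "(\<forall>i\<in>{1..n}. \<forall>j\<in>{1..n}. Theta_set n G i = Theta_set n G j)
    \<and> (\<forall>i\<in>{1..n}. \<forall>j\<in>{1..n}. \<forall>i'\<in>{1..n}. \<forall>j'\<in>{1..n}. i \<noteq> j \<longrightarrow> i' \<noteq> j' \<longrightarrow>
          S_set n G i j = S_set n G i' j' \<and> T_set n G i j = T_set n G i' j'
          \<and> T_set n G i j = S_set n G i j)
    \<and> (\<exists>\<alpha> \<beta>. (\<forall>i\<in>{1..n}. cyclic_of_order (Theta_set n G i) \<alpha>)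
          \<and> (\<forall>i\<in>{1..n}. \<forall>j\<in>{1..n}. i \<noteq> j \<longrightarrow> cyclic_of_order (S_set n G i j) \<beta>)
          \<and> even \<beta> \<and> \<alpha> dvd \<beta>)"
proof -
  interpret swap_aut_group n G
    using assms(3,4,7) by unfold_locales (simp_all add: T_set_def)
  have one: "1 \<in> {1..n}" and two: "2 \<in> {1..n}" and one_neq_two: "(1::nat) \<noteq> 2"
    using assms(2) by auto
  let ?\<Theta> = "Theta_set n G 1" and ?S = "S_set n G 1 2"
  have Theta: "mult_subgroup ?\<Theta>" and S: "mult_subgroup ?S"
    using Theta_mult_subgroup[OF one] S_mult_subgroup[OF one two] .
  have "\<forall>i\<in>{1..n}. \<forall>j\<in>{1..n}. Theta_set n G i = Theta_set n G j"
    using Theta_eq by blast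
  moreover have "\<forall>i\<in>{1..n}. \<forall>j\<in>{1..n}. \<forall>i'\<in>{1..n}. \<forall>j'\<in>{1..n}. i \<noteq> j \<longrightarrow> i' \<noteq> j' \<longrightarrow>
      S_set n G i j = S_set n G i' j' \<and> T_set n G i j = T_set n G i' j'
      \<and> T_set n G i j = S_set n G i j"
    by (intro ballI impI conjI) (rule S_eq T_eq T_eq_S; assumption)+
  moreover have "\<forall>i\<in>{1..n}. cyclic_of_order (Theta_set n G i) (card ?\<Theta>)"
    using mult_subgroup_cyclic_of_order[OF Theta] Theta_eq[OF _ one] by metis
  moreover have "\<forall>i\<in>{1..n}. \<forall>j\<in>{1..n}. i \<noteq> j \<longrightarrow> cyclic_of_order (S_set n G i j) (card ?S)"
    using mult_subgroup_cyclic_of_order[OF S] S_eq[OF _ _ one two _ one_neq_two] by metis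
  moreover have "even (card ?S)"
    using mult_subgroup_even_card[OF S minus_one_in_S[OF one two tau_one[OF one two one_neq_two]]] .
  moreover have "card ?\<Theta> dvd card ?S"
    using mult_subgroup_card_dvd[OF Theta S Theta_subset_S[OF one two one_neq_two]] .
  ultimately show ?thesis by blast
qed

end
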